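(* Consider a single invocation of an MPI barrier among a set of participating MPI ranks, and a checkpoint coordinator that sends a first message to each participating rank, each rank replying with its current status relative to the barrier (not yet entered, inside, or exited). If at least one of the replies to the first messages reports that its rank has exited the barrier, and the coordinator, after receiving these replies, sends a second message to each participating rank, then each participating rank will reply to the second message that it has entered the barrier (and possibly also exited it).
   Context: Events (sending/receiving messages, entering/exiting a barrier) are ordered by Lamport's happens-before relation; a rank's reply to a message reflects its state at the moment of replying, which happens after it received the message and before the coordinator receives the reply. Barrier axiom (assumed): for a given invocation of an MPI barrier, it never happens that a rank A exits the barrier before (under happens-before) another participating rank B enters that barrier. *)

theory Defs
  imports Main
begin

datatype status = NotEntered | Inside | Exited

definition status_at ::
  "('e \<Rightarrow> 'e \<Rightarrow> bool) \<Rightarrow> 'e \<Rightarrow> 'e \<Rightarrow> 'e \<Rightarrow> status" where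
  "status_at hb ent ex e =
     (if hb ex e then Exited else if hb ent e then Inside else NotEntered)"

text \<open>A model of one barrier invocation among ranks R, observed by a coordinator.
  hb : Lamport happens-before on events (a strict partial order);
  ent r / ex r : rank r enters / exits the barrier;
  snd1 r / rpl1 r / rcv1 r : coordinator sends 1st message to r, r replies,
     coordinator receives the reply; similarly snd2 / rpl2 / rcv2 for the 2nd message.\<close>
definition barrier_ckpt_model ::
  "'r set \<Rightarrow> ('e \<Rightarrow> 'e \<Rightarrow> bool) \<Rightarrow> ('r \<Rightarrow> 'e) \<Rightarrow> ('r \<Rightarrow> 'e) \<Rightarrow>
   ('r \<Rightarrow> 'e) \<Rightarrow> ('r \<Rightarrow> 'e) \<Rightarrow> ('r \<Rightarrow> 'e) \<Rightarrow>
   ('r \<Rightarrow> 'e) \<Rightarrow> ('r \<Rightarrow> 'e) \<Rightarrow> ('r \<Rightarrow> 'e) \<Rightarrow> bool" where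
  "barrier_ckpt_model R hb ent ex snd1 rpl1 rcv1 snd2 rpl2 rcv2 \<longleftrightarrow>
     \<comment> \<open>happens-before is a strict partial order\<close>
     (\<forall>a. \<not> hb a a) \<and> (\<forall>a b c. hb a b \<longrightarrow> hb b c \<longrightarrow> hb a c) \<and>
     \<comment> \<open>each rank's events (entry, exit, replies) are distinct and totally ordered\<close>
     (\<forall>r\<in>R. \<forall>a\<in>{ent r, ex r, rpl1 r, rpl2 r}. \<forall>b\<in>{ent r, ex r, rpl1 r, rpl2 r}.
         a = b \<or> hb a b \<or> hb b a) \<and>
     (\<forall>r\<in>R. distinct [ent r, ex r, rpl1 r, rpl2 r]) \<and>
     \<comment> \<open>the coordinator's events are totally ordered\<close>
     (\<forall>a\<in>snd1 ` R \<union> rcv1 ` R \<union> snd2 ` R \<union> rcv2 ` R.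
        \<forall>b\<in>snd1 ` R \<union> rcv1 ` R \<union> snd2 ` R \<union> rcv2 ` R. a = b \<or> hb a b \<or> hb b a) \<and>
     \<comment> \<open>a rank enters the barrier before exiting it\<close>
     (\<forall>r\<in>R. hb (ent r) (ex r)) \<and>
     \<comment> \<open>message ordering: send, then reply, then receipt of reply\<close>
     (\<forall>r\<in>R. hb (snd1 r) (rpl1 r) \<and> hb (rpl1 r) (rcv1 r)) \<and>
     (\<forall>r\<in>R. hb (snd2 r) (rpl2 r) \<and> hb (rpl2 r) (rcv2 r)) \<and>
     \<comment> \<open>barrier axiom: no rank exits before another participating rank enters\<close>
     (\<forall>a\<in>R. \<forall>b\<in>R. \<not> hb (ex a) (ent b))"

end

theory Submission
  imports Defs
begin

text \<open>If rank a had exited at its first reply, then its exit happens-before every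
  second reply, via the chain: first reply of a, its receipt, second send to b,
  second reply of b. Were the second reply of b before the entry of b, the exit of a
  would precede that entry, contradicting the barrier axiom; as the two events of b
  are distinct and comparable, b has entered.\<close>

lemma status_at_entered_iff:
  assumes "hb ent ex" and "transp hb"
  shows "status_at hb ent ex e \<in> {Inside, Exited} \<longleftrightarrow> hb ent e"
  using assms by (auto simp: status_at_def dest: transpD)

lemma status_at_ExitedD:
  "status_at hb ent ex e = Exited \<Longrightarrow> hb ex e"
  by (simp add: status_at_def split: if_splits)

lemma hb_of_not_hb_reversed:
  assumes "transp hb" and "\<not> hb x y" and "y = e \<or> hb y e \<or> hb e y"
    and "y \<noteq> e" and "hb x e"
  shows "hb y e"
  using assms transpD[of hb x e y] by blast

lemma barrier_ckpt_modelD: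
  assumes "barrier_ckpt_model R hb ent ex snd1 rpl1 rcv1 snd2 rpl2 rcv2"
  shows barrier_ckpt_model_transp: "transp hb"
    and barrier_ckpt_model_entry_reply2_comparable:
      "r \<in> R \<Longrightarrow> ent r = rpl2 r \<or> hb (ent r) (rpl2 r) \<or> hb (rpl2 r) (ent r)"
    and barrier_ckpt_model_entry_ne_reply2: "r \<in> R \<Longrightarrow> ent r \<noteq> rpl2 r"
    and barrier_ckpt_model_entry_exit: "r \<in> R \<Longrightarrow> hb (ent r) (ex r)"
    and barrier_ckpt_model_reply1_receipt: "r \<in> R \<Longrightarrow> hb (rpl1 r) (rcv1 r)"
    and barrier_ckpt_model_send2_reply2: "r \<in> R \<Longrightarrow> hb (snd2 r) (rpl2 r)"
    and barrier_ckpt_model_barrier: "a \<in> R \<Longrightarrow> b \<in> R \<Longrightarrow> \<not> hb (ex a) (ent b)"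
  using assms unfolding barrier_ckpt_model_def transp_def by (elim conjE; simp)+

theorem lemma1:
  assumes model: "barrier_ckpt_model R hb ent ex snd1 rpl1 rcv1 snd2 rpl2 rcv2"
    and exited: "\<exists>a\<in>R. status_at hb (ent a) (ex a) (rpl1 a) = Exited"
    and after: "\<forall>a\<in>R. \<forall>b\<in>R. hb (rcv1 a) (snd2 b)"
  shows "\<forall>b\<in>R. status_at hb (ent b) (ex b) (rpl2 b) \<in> {Inside, Exited}"
proof
  fix b assume b: "b \<in> R"
  note trans = barrier_ckpt_model_transp[OF model]
  note [trans] = transpD[OF trans]
  obtain a where a: "a \<in> R" and exit_reply1: "hb (ex a) (rpl1 a)"
    using exited by (auto dest: status_at_ExitedD)
  note exit_reply1
  also have "hb (rpl1 a) (rcv1 a)"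
    by (rule barrier_ckpt_model_reply1_receipt[OF model a])
  also have "hb (rcv1 a) (snd2 b)"
    using after a b by blast
  also have "hb (snd2 b) (rpl2 b)"
    by (rule barrier_ckpt_model_send2_reply2[OF model b])
  finally have "hb (ex a) (rpl2 b)" .
  then have "hb (ent b) (rpl2 b)"
    by (rule hb_of_not_hb_reversed[OF trans barrier_ckpt_model_barrier[OF model a b]
          barrier_ckpt_model_entry_reply2_comparable[OF model b]
          barrier_ckpt_model_entry_ne_reply2[OF model b]])
  then show "status_at hb (ent b) (ex b) (rpl2 b) \<in> {Inside, Exited}"
    using status_at_entered_iff[OF barrier_ckpt_model_entry_exit[OF model b] trans] by simp
qed

end
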